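(* Let $x\in\mathbb{R}^d$ be any vector, $M\in\mathbb{R}^{n\times n}$ any matrix, and $A$ a random $n\times d$ matrix with i.i.d.\ $N(0,1)$ entries. For any $\eta\in(0,1/2)$, $$\Pr\Big( \|A^\top M A x\|_2 \le \|M\|_F\cdot\|x\|_2\cdot\sqrt{\tfrac{(d-1)\pi}{8n}}\cdot \eta^{1+1/(d-1)}\Big) \;\le\; 2\eta .$$
   Context: $\|\cdot\|_F$ denotes the Frobenius norm and $\pi = 3.14159\ldots$. *)

theory Defs
  imports "HOL-Probability.Probability"
begin

text \<open>Matrices are functions on index pairs, vectors functions on indices (0-based).\<close>

definition gaussian_matrix :: "nat \<Rightarrow> nat \<Rightarrow> (nat \<times> nat \<Rightarrow> real) measure" where
  "gaussian_matrix n d = PiM ({..<n} \<times> {..<d}) (\<lambda>_. std_normal_distribution)"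

definition vec_norm :: "nat \<Rightarrow> (nat \<Rightarrow> real) \<Rightarrow> real" where
  "vec_norm d x = sqrt (\<Sum>j<d. (x j)\<^sup>2)"

definition frob_norm :: "nat \<Rightarrow> (nat \<Rightarrow> nat \<Rightarrow> real) \<Rightarrow> real" where
  "frob_norm n M = sqrt (\<Sum>i<n. \<Sum>j<n. (M i j)\<^sup>2)"

definition AtMAx :: "nat \<Rightarrow> nat \<Rightarrow> (nat \<times> nat \<Rightarrow> real) \<Rightarrow> (nat \<Rightarrow> nat \<Rightarrow> real)
    \<Rightarrow> (nat \<Rightarrow> real) \<Rightarrow> nat \<Rightarrow> real" where
  "AtMAx n d A M x = (\<lambda>k. \<Sum>i<n. \<Sum>l<n. A (i, k) * M i l * (\<Sum>j<d. A (l, j) * x j))"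

end

theory Submission
  imports Defs
begin

text \<open>The law of the Gaussian matrix \<open>A\<close> is invariant under \<open>A \<mapsto> A Q\<close> for rotations \<open>Q\<close>, which
  replaces \<open>x\<close> by \<open>Q\<^sup>T x\<close>; so we may take \<open>x = \<parallel>x\<parallel> e\<^sub>0\<close>, and then
  \<open>\<parallel>A\<^sup>T M A x\<parallel>\<^sup>2 = \<parallel>x\<parallel>\<^sup>2 \<Sum>\<^sub>k \<langle>a\<^sub>k, M a\<^sub>0\<rangle>\<^sup>2\<close> with \<open>a\<^sub>k\<close> the columns of \<open>A\<close>. Fix a row \<open>M\<^sub>i\<close> of maximal
  norm, so \<open>\<parallel>M\<^sub>i\<parallel>\<^sup>2 \<ge> \<parallel>M\<parallel>\<^sub>F\<^sup>2 / n\<close>. Either \<open>(M a\<^sub>0)\<^sub>i = \<langle>M\<^sub>i, a\<^sub>0\<rangle> \<sim> N(0, \<parallel>M\<^sub>i\<parallel>\<^sup>2)\<close> is small,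
  which has probability at most \<open>\<eta>\<close> since the Gaussian density is bounded, or \<open>\<parallel>M a\<^sub>0\<parallel>\<close> is large;
  conditionally on \<open>a\<^sub>0\<close>, the \<open>\<langle>a\<^sub>k, M a\<^sub>0\<rangle>\<close> for \<open>k \<ge> 1\<close> are then independent
  \<open>N(0, \<parallel>M a\<^sub>0\<parallel>\<^sup>2)\<close>, and a Chernoff bound for the sum of their squares gives probability at most \<open>\<eta>\<close>.

  Rotation invariance is reduced to Givens rotations in coordinate planes, and a plane rotation
  is a product of three shears, each preserving Lebesgue measure; the Gaussian density is
  rotation invariant.\<close>

lemma nn_integral_lborel_pair_shear_fst:
  fixes g :: "real \<times> real \<Rightarrow> ennreal"
  assumes [measurable]: "g \<in> borel_measurable (lborel \<Otimes>\<^sub>M lborel)"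
  shows "(\<integral>\<^sup>+z. g (fst z + a * snd z, snd z) \<partial>(lborel \<Otimes>\<^sub>M lborel)) = (\<integral>\<^sup>+z. g z \<partial>(lborel \<Otimes>\<^sub>M lborel))"
proof -
  have pf: "pair_sigma_finite lborel lborel" by unfold_locales
  have "(\<integral>\<^sup>+z. g (fst z + a * snd z, snd z) \<partial>(lborel \<Otimes>\<^sub>M lborel))
      = (\<integral>\<^sup>+y. (\<integral>\<^sup>+x. g (x + a * y, y) \<partial>lborel) \<partial>lborel)"
    by (subst pair_sigma_finite.nn_integral_snd[OF pf, symmetric]) (auto simp: measurable_pair_iff)
  also have "\<dots> = (\<integral>\<^sup>+y. (\<integral>\<^sup>+x. g (x, y) \<partial>lborel) \<partial>lborel)"
  proof (rule nn_integral_cong)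
    fix y :: real
    have "(\<integral>\<^sup>+x. g (x, y) \<partial>lborel) = ennreal \<bar>1\<bar> * (\<integral>\<^sup>+x. g (a * y + 1 * x, y) \<partial>lborel)"
      by (rule nn_integral_real_affine) auto
    then show "(\<integral>\<^sup>+x. g (x + a * y, y) \<partial>lborel) = (\<integral>\<^sup>+x. g (x, y) \<partial>lborel)"
      by (simp add: add.commute)
  qed
  also have "\<dots> = (\<integral>\<^sup>+z. g z \<partial>(lborel \<Otimes>\<^sub>M lborel))"
    by (subst pair_sigma_finite.nn_integral_snd[OF pf, symmetric]) auto
  finally show ?thesis .
qed

lemma nn_integral_lborel_pair_shear_snd:
  fixes g :: "real \<times> real \<Rightarrow> ennreal"
  assumes [measurable]: "g \<in> borel_measurable (lborel \<Otimes>\<^sub>M lborel)"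
  shows "(\<integral>\<^sup>+z. g (fst z, snd z + b * fst z) \<partial>(lborel \<Otimes>\<^sub>M lborel)) = (\<integral>\<^sup>+z. g z \<partial>(lborel \<Otimes>\<^sub>M lborel))"
proof -
  have "(\<integral>\<^sup>+z. g (fst z, snd z + b * fst z) \<partial>(lborel \<Otimes>\<^sub>M lborel))
      = (\<integral>\<^sup>+x. (\<integral>\<^sup>+y. g (x, y + b * x) \<partial>lborel) \<partial>lborel)"
    by (subst lborel.nn_integral_fst[symmetric]) (auto simp: measurable_pair_iff)
  also have "\<dots> = (\<integral>\<^sup>+x. (\<integral>\<^sup>+y. g (x, y) \<partial>lborel) \<partial>lborel)"
  proof (rule nn_integral_cong)
    fix x :: real
    have "(\<integral>\<^sup>+y. g (x, y) \<partial>lborel) = ennreal \<bar>1\<bar> * (\<integral>\<^sup>+y. g (x, b * x + 1 * y) \<partial>lborel)"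
      by (rule nn_integral_real_affine) auto
    then show "(\<integral>\<^sup>+y. g (x, y + b * x) \<partial>lborel) = (\<integral>\<^sup>+y. g (x, y) \<partial>lborel)"
      by (simp add: add.commute)
  qed
  also have "\<dots> = (\<integral>\<^sup>+z. g z \<partial>(lborel \<Otimes>\<^sub>M lborel))"
    by (subst lborel.nn_integral_fst[symmetric]) auto
  finally show ?thesis .
qed

definition rotation2 :: "real \<Rightarrow> real \<Rightarrow> real \<times> real \<Rightarrow> real \<times> real" where
  "rotation2 c s z = (c * fst z - s * snd z, s * fst z + c * snd z)"

lemma rotation2_measurable[measurable]:
  "rotation2 c s \<in> (lborel \<Otimes>\<^sub>M lborel) \<rightarrow>\<^sub>M (lborel \<Otimes>\<^sub>M lborel)"
  unfolding rotation2_def by measurable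

text \<open>The decomposition breaks down at \<open>c = -1\<close> (rotation by \<open>\<pi>\<close>).\<close>

lemma rotation2_eq_shears:
  assumes "c\<^sup>2 + s\<^sup>2 = 1" "c \<noteq> -1"
  defines "t \<equiv> s / (1 + c)"
  shows "rotation2 c s z =
    (\<lambda>(x, y). (x - t * y, y)) ((\<lambda>(x, y). (x, y + s * x)) ((\<lambda>(x, y). (x - t * y, y)) z))"
proof -
  have c1: "1 + c \<noteq> 0" using assms(2) by auto
  have ts: "t * s = 1 - c"
  proof -
    have "s * s = (1 - c) * (1 + c)" using assms(1) by (simp add: power2_eq_square algebra_simps)
    then show ?thesis unfolding t_def using c1 by (simp add: field_simps)
  qed
  have tc: "t * (1 + c) = s" unfolding t_def using c1 by simp
  obtain x y where z: "z = (x, y)" by fastforce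
  have "x - t * y - t * (y + s * (x - t * y)) = (1 - t * s) * x - t * (1 + (1 - t * s)) * y"
    by (simp add: algebra_simps)
  also have "\<dots> = c * x - s * y" using ts tc by simp
  finally have e1: "x - t * y - t * (y + s * (x - t * y)) = c * x - s * y" .
  have "y + s * (x - t * y) = s * x + (1 - t * s) * y" by (simp add: algebra_simps)
  then have e2: "y + s * (x - t * y) = s * x + c * y" using ts by simp
  show ?thesis unfolding z rotation2_def using e1 e2 by simp
qed

lemma nn_integral_lborel_pair_rotation2:
  fixes g :: "real \<times> real \<Rightarrow> ennreal"
  assumes g[measurable]: "g \<in> borel_measurable (lborel \<Otimes>\<^sub>M lborel)"
    and cs: "c\<^sup>2 + s\<^sup>2 = 1" "c \<noteq> -1"
  shows "(\<integral>\<^sup>+z. g (rotation2 c s z) \<partial>(lborel \<Otimes>\<^sub>M lborel)) = (\<integral>\<^sup>+z. g z \<partial>(lborel \<Otimes>\<^sub>M lborel))"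
proof -
  define t where "t = s / (1 + c)"
  define h1 where "h1 = (\<lambda>(x::real, y::real). (x - t * y, y))"
  define h2 where "h2 = (\<lambda>(x::real, y::real). (x, y + s * x))"
  have [measurable]: "h1 \<in> (lborel \<Otimes>\<^sub>M lborel) \<rightarrow>\<^sub>M (lborel \<Otimes>\<^sub>M lborel)"
    "h2 \<in> (lborel \<Otimes>\<^sub>M lborel) \<rightarrow>\<^sub>M (lborel \<Otimes>\<^sub>M lborel)"
    unfolding h1_def h2_def by measurable
  have shear1: "(\<integral>\<^sup>+z. f (h1 z) \<partial>(lborel \<Otimes>\<^sub>M lborel)) = (\<integral>\<^sup>+z. f z \<partial>(lborel \<Otimes>\<^sub>M lborel))"
    if [measurable]: "f \<in> borel_measurable (lborel \<Otimes>\<^sub>M lborel)" for f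
    using nn_integral_lborel_pair_shear_fst[of f "- t"] by (simp add: h1_def case_prod_beta)
  have shear2: "(\<integral>\<^sup>+z. f (h2 z) \<partial>(lborel \<Otimes>\<^sub>M lborel)) = (\<integral>\<^sup>+z. f z \<partial>(lborel \<Otimes>\<^sub>M lborel))"
    if [measurable]: "f \<in> borel_measurable (lborel \<Otimes>\<^sub>M lborel)" for f
    using nn_integral_lborel_pair_shear_snd[of f s] by (simp add: h2_def case_prod_beta)
  have "(\<integral>\<^sup>+z. g (rotation2 c s z) \<partial>(lborel \<Otimes>\<^sub>M lborel))
      = (\<integral>\<^sup>+z. (g \<circ> h1 \<circ> h2) (h1 z) \<partial>(lborel \<Otimes>\<^sub>M lborel))"
    using rotation2_eq_shears[OF cs] by (simp add: h1_def h2_def t_def)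
  also have "\<dots> = (\<integral>\<^sup>+z. (g \<circ> h1) (h2 z) \<partial>(lborel \<Otimes>\<^sub>M lborel))"
    using shear1[of "g \<circ> h1 \<circ> h2"] by simp
  also have "\<dots> = (\<integral>\<^sup>+z. g (h1 z) \<partial>(lborel \<Otimes>\<^sub>M lborel))"
    using shear2[of "g \<circ> h1"] by simp
  also have "\<dots> = (\<integral>\<^sup>+z. g z \<partial>(lborel \<Otimes>\<^sub>M lborel))"
    by (rule shear1) (rule g)
  finally show ?thesis .
qed

lemma std_normal_density_rotation2:
  assumes "c\<^sup>2 + s\<^sup>2 = 1"
  shows "std_normal_density (c * x - s * y) * std_normal_density (s * x + c * y)
       = std_normal_density x * std_normal_density y"
proof -
  have "(c * x - s * y)\<^sup>2 + (s * x + c * y)\<^sup>2 = (c\<^sup>2 + s\<^sup>2) * (x\<^sup>2 + y\<^sup>2)"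
    by (simp add: power2_eq_square algebra_simps)
  then have sq: "(c * x - s * y)\<^sup>2 + (s * x + c * y)\<^sup>2 = x\<^sup>2 + y\<^sup>2"
    using assms by simp
  have "std_normal_density a * std_normal_density b = (1 / sqrt (2 * pi))\<^sup>2 * exp (- (a\<^sup>2 + b\<^sup>2) / 2)"
    for a b
    unfolding std_normal_density_def by (simp add: power2_eq_square exp_add[symmetric] field_simps)
  then show ?thesis using sq by simp
qed

lemma prob_space_std_normal: "prob_space std_normal_distribution"
  by (rule prob_space_normal_density) simp

lemma std_normal_pair_eq_density:
  "std_normal_distribution \<Otimes>\<^sub>M std_normal_distribution = density (lborel \<Otimes>\<^sub>M lborel)
     (\<lambda>(x, y). ennreal (std_normal_density x) * ennreal (std_normal_density y))"
proof (rule pair_measure_density)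
  show "sigma_finite_measure lborel" by unfold_locales
  show "sigma_finite_measure std_normal_distribution"
    using prob_space_std_normal by (simp add: prob_space_imp_sigma_finite)
qed auto

lemma nn_integral_std_normal_pair_rotation2:
  fixes h :: "real \<times> real \<Rightarrow> ennreal"
  assumes h[measurable]: "h \<in> borel_measurable (lborel \<Otimes>\<^sub>M lborel)"
    and cs: "c\<^sup>2 + s\<^sup>2 = 1" "c \<noteq> -1"
  shows "(\<integral>\<^sup>+z. h (rotation2 c s z) \<partial>(std_normal_distribution \<Otimes>\<^sub>M std_normal_distribution))
       = (\<integral>\<^sup>+z. h z \<partial>(std_normal_distribution \<Otimes>\<^sub>M std_normal_distribution))"
proof -
  define \<phi>2 where "\<phi>2 z = ennreal (std_normal_density (fst z)) * ennreal (std_normal_density (snd z))"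
    for z :: "real \<times> real"
  have [measurable]: "\<phi>2 \<in> borel_measurable (lborel \<Otimes>\<^sub>M lborel)" unfolding \<phi>2_def by measurable
  have eq: "(\<integral>\<^sup>+z. f z \<partial>(std_normal_distribution \<Otimes>\<^sub>M std_normal_distribution))
      = (\<integral>\<^sup>+z. \<phi>2 z * f z \<partial>(lborel \<Otimes>\<^sub>M lborel))"
    if [measurable]: "f \<in> borel_measurable (lborel \<Otimes>\<^sub>M lborel)" for f
    unfolding std_normal_pair_eq_density \<phi>2_def
    by (subst nn_integral_density) (auto simp: case_prod_beta intro!: nn_integral_cong)
  have \<phi>2_rot: "\<phi>2 (rotation2 c s z) = \<phi>2 z" for z
    using std_normal_density_rotation2[OF cs(1)]
    by (simp add: \<phi>2_def rotation2_def ennreal_mult'[symmetric])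
  have "(\<integral>\<^sup>+z. h (rotation2 c s z) \<partial>(std_normal_distribution \<Otimes>\<^sub>M std_normal_distribution))
      = (\<integral>\<^sup>+z. (\<lambda>z. \<phi>2 z * h z) (rotation2 c s z) \<partial>(lborel \<Otimes>\<^sub>M lborel))"
    by (subst eq) (simp_all add: \<phi>2_rot)
  also have "\<dots> = (\<integral>\<^sup>+z. \<phi>2 z * h z \<partial>(lborel \<Otimes>\<^sub>M lborel))"
    by (rule nn_integral_lborel_pair_rotation2[OF _ cs]) measurable
  also have "\<dots> = (\<integral>\<^sup>+z. h z \<partial>(std_normal_distribution \<Otimes>\<^sub>M std_normal_distribution))"
    by (subst eq) simp_all
  finally show ?thesis .
qed

abbreviation gauss :: "'i set \<Rightarrow> ('i \<Rightarrow> real) measure" where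
  "gauss K \<equiv> PiM K (\<lambda>_. std_normal_distribution)"

lemma product_sigma_finite_std_normal: "product_sigma_finite (\<lambda>_::'i. std_normal_distribution)"
  unfolding product_sigma_finite_def using prob_space_std_normal prob_space_imp_sigma_finite by blast

lemma prob_space_gauss: "prob_space (gauss K)"
  by (rule prob_space_PiM) (rule prob_space_std_normal)

lemma sets_std_normal[simp, measurable_cong]: "sets std_normal_distribution = sets borel"
  by simp

lemma coordinate_measurable_gauss[measurable]: "(\<lambda>A. A \<kappa>) \<in> borel_measurable (gauss K)"
proof (cases "\<kappa> \<in> K")
  case True
  have "(\<lambda>A. A \<kappa>) \<in> gauss K \<rightarrow>\<^sub>M std_normal_distribution"
    by (rule measurable_component_singleton[OF True])
  then show ?thesis by (simp add: measurable_cong_sets[OF refl sets_std_normal])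
next
  case False
  have "(\<lambda>A. undefined) \<in> borel_measurable (gauss K)" by simp
  then show ?thesis
    by (rule measurable_cong[THEN iffD1, rotated])
      (use False in \<open>auto simp: space_PiM PiE_def extensional_def\<close>)
qed

definition rotate_coords :: "'i \<Rightarrow> 'i \<Rightarrow> real \<Rightarrow> real \<Rightarrow> ('i \<Rightarrow> real) \<Rightarrow> ('i \<Rightarrow> real)" where
  "rotate_coords a b c s f = f(a := c * f a - s * f b, b := s * f a + c * f b)"

lemma rotate_coords_measurable[measurable]:
  assumes "a \<in> K" "b \<in> K"
  shows "rotate_coords a b c s \<in> gauss K \<rightarrow>\<^sub>M gauss K"
proof -
  have "(\<lambda>f. \<lambda>i. rotate_coords a b c s f i) \<in> gauss K \<rightarrow>\<^sub>M gauss K"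
  proof (rule measurable_PiM_single')
    fix i assume "i \<in> K"
    then show "(\<lambda>f. rotate_coords a b c s f i) \<in> gauss K \<rightarrow>\<^sub>M std_normal_distribution"
      unfolding rotate_coords_def using assms by (cases "i = b"; cases "i = a") auto
  qed (use assms in \<open>auto simp: rotate_coords_def space_PiM PiE_def extensional_def\<close>)
  then show ?thesis by simp
qed

lemma nn_integral_gauss_pair_rotate_coords:
  fixes H :: "('i \<Rightarrow> real) \<Rightarrow> ennreal"
  assumes H[measurable]: "H \<in> borel_measurable (gauss {a, b})" and "a \<noteq> b"
    and cs: "c\<^sup>2 + s\<^sup>2 = 1" "c \<noteq> -1"
  shows "(\<integral>\<^sup>+f. H (rotate_coords a b c s f) \<partial>gauss {a, b}) = (\<integral>\<^sup>+f. H f \<partial>gauss {a, b})"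
proof -
  interpret product_sigma_finite "\<lambda>_::'i. std_normal_distribution"
    by (rule product_sigma_finite_std_normal)
  define join where "join z = (\<lambda>i. if i = a then fst z else if i = b then snd z else undefined)"
    for z :: "real \<times> real"
  have [measurable]: "join \<in> (lborel \<Otimes>\<^sub>M lborel) \<rightarrow>\<^sub>M gauss {a, b}"
  proof -
    have "(\<lambda>z. \<lambda>i. join z i) \<in> (lborel \<Otimes>\<^sub>M lborel) \<rightarrow>\<^sub>M gauss {a, b}"
      by (rule measurable_PiM_single') (auto simp: join_def PiE_def extensional_def)
    then show ?thesis by simp
  qed
  have pair_sets: "sets (std_normal_distribution \<Otimes>\<^sub>M std_normal_distribution) = sets (lborel \<Otimes>\<^sub>M lborel)"
    by (rule sets_pair_measure_cong) simp_all
  have integral_join: "(\<integral>\<^sup>+f. G (f a, f b) \<partial>gauss {a, b})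
      = (\<integral>\<^sup>+z. G z \<partial>(std_normal_distribution \<Otimes>\<^sub>M std_normal_distribution))"
    if "G \<in> borel_measurable (lborel \<Otimes>\<^sub>M lborel)" for G
    using product_nn_integral_pair[of "\<lambda>u v. G (u, v)", OF _ \<open>a \<noteq> b\<close>] that
    by (simp add: measurable_cong_sets[OF pair_sets refl])
  have join_ab: "join (f a, f b) = f" if "f \<in> space (gauss {a, b})" for f
    using that \<open>a \<noteq> b\<close> by (auto simp: join_def space_PiM PiE_def extensional_def)
  have rot_join: "rotate_coords a b c s (join z) = join (rotation2 c s z)" for z
    using \<open>a \<noteq> b\<close> by (auto simp: rotate_coords_def join_def rotation2_def)
  have "(\<integral>\<^sup>+f. H (rotate_coords a b c s f) \<partial>gauss {a, b})
      = (\<integral>\<^sup>+f. H (join (rotation2 c s (f a, f b))) \<partial>gauss {a, b})"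
    by (rule nn_integral_cong) (metis join_ab rot_join)
  also have "\<dots> = (\<integral>\<^sup>+z. H (join (rotation2 c s z)) \<partial>(std_normal_distribution \<Otimes>\<^sub>M std_normal_distribution))"
    by (rule integral_join) measurable
  also have "\<dots> = (\<integral>\<^sup>+z. H (join z) \<partial>(std_normal_distribution \<Otimes>\<^sub>M std_normal_distribution))"
    by (rule nn_integral_std_normal_pair_rotation2[OF _ cs]) measurable
  also have "\<dots> = (\<integral>\<^sup>+f. H (join (f a, f b)) \<partial>gauss {a, b})"
    by (rule integral_join[symmetric]) measurable
  also have "\<dots> = (\<integral>\<^sup>+f. H f \<partial>gauss {a, b})"
    by (rule nn_integral_cong) (simp add: join_ab)
  finally show ?thesis .
qed

lemma nn_integral_gauss_rotate_coords:
  fixes h :: "('i \<Rightarrow> real) \<Rightarrow> ennreal"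
  assumes K: "finite K" "a \<in> K" "b \<in> K" "a \<noteq> b"
    and h[measurable]: "h \<in> borel_measurable (gauss K)"
    and cs: "c\<^sup>2 + s\<^sup>2 = 1" "c \<noteq> -1"
  shows "(\<integral>\<^sup>+f. h (rotate_coords a b c s f) \<partial>gauss K) = (\<integral>\<^sup>+f. h f \<partial>gauss K)"
proof -
  interpret product_sigma_finite "\<lambda>_::'i. std_normal_distribution"
    by (rule product_sigma_finite_std_normal)
  define R where "R = K - {a, b}"
  have KR: "K = R \<union> {a, b}" and disj: "R \<inter> {a, b} = {}" "finite R" "finite {a, b}"
    using K unfolding R_def by auto
  have hR: "h \<in> borel_measurable (gauss (R \<union> {a, b}))" using h KR by simp
  have "(\<lambda>f. h (rotate_coords a b c s f)) \<in> borel_measurable (gauss K)"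
    using K by measurable
  then have "(\<integral>\<^sup>+f. h (rotate_coords a b c s f) \<partial>gauss K)
      = (\<integral>\<^sup>+x. (\<integral>\<^sup>+y. h (rotate_coords a b c s (merge R {a, b} (x, y))) \<partial>gauss {a, b}) \<partial>gauss R)"
    unfolding KR by (intro product_nn_integral_fold[OF disj]) simp
  also have "\<dots> = (\<integral>\<^sup>+x. (\<integral>\<^sup>+y. h (merge R {a, b} (x, y)) \<partial>gauss {a, b}) \<partial>gauss R)"
  proof (rule nn_integral_cong)
    fix x assume "x \<in> space (gauss R)"
    have "rotate_coords a b c s (merge R {a, b} (x, y)) = merge R {a, b} (x, rotate_coords a b c s y)" for y
      using K by (auto simp: R_def rotate_coords_def merge_def fun_eq_iff)
    moreover have "(\<lambda>y. h (merge R {a, b} (x, y))) \<in> borel_measurable (gauss {a, b})"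
      using hR \<open>x \<in> space (gauss R)\<close> by measurable
    ultimately show "(\<integral>\<^sup>+y. h (rotate_coords a b c s (merge R {a, b} (x, y))) \<partial>gauss {a, b})
        = (\<integral>\<^sup>+y. h (merge R {a, b} (x, y)) \<partial>gauss {a, b})"
      using nn_integral_gauss_pair_rotate_coords[OF _ \<open>a \<noteq> b\<close> cs] by simp
  qed
  also have "\<dots> = (\<integral>\<^sup>+f. h f \<partial>gauss K)"
    unfolding KR by (rule product_nn_integral_fold[OF disj hR, symmetric])
  finally show ?thesis .
qed

definition gauss_invariant :: "'i set \<Rightarrow> (('i \<Rightarrow> real) \<Rightarrow> ('i \<Rightarrow> real)) \<Rightarrow> bool" where
  "gauss_invariant K \<Phi> \<longleftrightarrow> \<Phi> \<in> gauss K \<rightarrow>\<^sub>M gauss K \<and> distr (gauss K) (gauss K) \<Phi> = gauss K"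

lemma gauss_invariantI:
  assumes \<Phi>[measurable]: "\<Phi> \<in> gauss K \<rightarrow>\<^sub>M gauss K"
    and inv: "\<And>h. h \<in> borel_measurable (gauss K) \<Longrightarrow> (\<integral>\<^sup>+A. h (\<Phi> A) \<partial>gauss K) = (\<integral>\<^sup>+A. h A \<partial>gauss K)"
  shows "gauss_invariant K \<Phi>"
  unfolding gauss_invariant_def
proof (intro conjI measure_eqI)
  fix S assume "S \<in> sets (distr (gauss K) (gauss K) \<Phi>)"
  then have S[measurable]: "S \<in> sets (gauss K)" by simp
  have "emeasure (distr (gauss K) (gauss K) \<Phi>) S = emeasure (gauss K) (\<Phi> -` S \<inter> space (gauss K))"
    by (rule emeasure_distr) simp_all
  also have "\<dots> = (\<integral>\<^sup>+A. indicator (\<Phi> -` S \<inter> space (gauss K)) A \<partial>gauss K)"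
    by (rule nn_integral_indicator[symmetric]) (rule measurable_sets[OF \<Phi> S])
  also have "\<dots> = (\<integral>\<^sup>+A. indicator S (\<Phi> A) \<partial>gauss K)"
    by (rule nn_integral_cong) (simp add: indicator_def)
  also have "\<dots> = emeasure (gauss K) S" by (simp add: inv)
  finally show "emeasure (distr (gauss K) (gauss K) \<Phi>) S = emeasure (gauss K) S" .
qed simp_all

lemma gauss_invariant_id: "gauss_invariant K (\<lambda>A. A)"
  by (simp add: gauss_invariant_def)

lemma gauss_invariant_comp:
  assumes "gauss_invariant K \<Phi>" "gauss_invariant K \<Psi>"
  shows "gauss_invariant K (\<Phi> \<circ> \<Psi>)"
proof -
  have [measurable]: "\<Phi> \<in> gauss K \<rightarrow>\<^sub>M gauss K" "\<Psi> \<in> gauss K \<rightarrow>\<^sub>M gauss K"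
    using assms by (simp_all add: gauss_invariant_def)
  have "distr (gauss K) (gauss K) (\<Phi> \<circ> \<Psi>) = distr (distr (gauss K) (gauss K) \<Psi>) (gauss K) \<Phi>"
    by (simp add: distr_distr)
  then show ?thesis using assms by (simp add: gauss_invariant_def)
qed

lemma emeasure_gauss_invariant:
  assumes "gauss_invariant K \<Phi>" "{A \<in> space (gauss K). P A} \<in> sets (gauss K)"
  shows "emeasure (gauss K) {A \<in> space (gauss K). P (\<Phi> A)} = emeasure (gauss K) {A \<in> space (gauss K). P A}"
proof -
  have \<Phi>: "\<Phi> \<in> gauss K \<rightarrow>\<^sub>M gauss K" using assms(1) by (simp add: gauss_invariant_def)
  have "{A \<in> space (gauss K). P (\<Phi> A)} = \<Phi> -` {A \<in> space (gauss K). P A} \<inter> space (gauss K)"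
    using measurable_space[OF \<Phi>] by auto
  then show ?thesis
    using emeasure_distr[OF \<Phi> assms(2)] assms(1) by (simp add: gauss_invariant_def)
qed

lemma gauss_invariant_rotate_coords:
  assumes "finite K" "a \<in> K" "b \<in> K" "a \<noteq> b" "c\<^sup>2 + s\<^sup>2 = 1" "c \<noteq> -1"
  shows "gauss_invariant K (rotate_coords a b c s)"
  using assms by (intro gauss_invariantI nn_integral_gauss_rotate_coords) simp_all

definition rotate_rows :: "'a \<Rightarrow> 'a \<Rightarrow> real \<Rightarrow> real \<Rightarrow> 'b set \<Rightarrow> ('a \<times> 'b \<Rightarrow> real) \<Rightarrow> ('a \<times> 'b \<Rightarrow> real)" where
  "rotate_rows p q c s R A = (\<lambda>(i, k).
     if k \<in> R \<and> i = p then c * A (p, k) - s * A (q, k)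
     else if k \<in> R \<and> i = q then s * A (p, k) + c * A (q, k) else A (i, k))"

definition rotate_cols :: "'b \<Rightarrow> 'b \<Rightarrow> real \<Rightarrow> real \<Rightarrow> 'a set \<Rightarrow> ('a \<times> 'b \<Rightarrow> real) \<Rightarrow> ('a \<times> 'b \<Rightarrow> real)" where
  "rotate_cols p q c s R A = (\<lambda>(i, k).
     if i \<in> R \<and> k = p then c * A (i, p) - s * A (i, q)
     else if i \<in> R \<and> k = q then s * A (i, p) + c * A (i, q) else A (i, k))"

lemma gauss_invariant_rotate_rows:
  fixes I :: "'a set" and J :: "'b set"
  assumes "finite I" "finite J" "p \<in> I" "q \<in> I" "p \<noteq> q" "c\<^sup>2 + s\<^sup>2 = 1" "c \<noteq> -1" "R \<subseteq> J"
  shows "gauss_invariant (I \<times> J) (rotate_rows p q c s R)"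
proof -
  have "finite R" using assms(2,8) by (rule finite_subset[rotated])
  then show ?thesis using \<open>R \<subseteq> J\<close>
  proof (induction R rule: finite_induct)
    case empty
    have "rotate_rows p q c s ({} :: 'b set) = (\<lambda>A. A)" by (auto simp: rotate_rows_def fun_eq_iff)
    then show ?case by (simp add: gauss_invariant_id)
  next
    case (insert k R)
    have split: "rotate_rows p q c s (insert k R) = rotate_coords (p, k) (q, k) c s \<circ> rotate_rows p q c s R"
      using insert.hyps \<open>p \<noteq> q\<close> by (auto simp: rotate_rows_def rotate_coords_def fun_eq_iff)
    have "gauss_invariant (I \<times> J) (rotate_coords (p, k) (q, k) c s)"
      using insert.prems assms by (intro gauss_invariant_rotate_coords) auto
    from gauss_invariant_comp[OF this insert.IH] insert.prems show ?case
      by (simp add: split comp_def)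
  qed
qed

lemma gauss_invariant_rotate_cols:
  fixes I :: "'a set" and J :: "'b set"
  assumes "finite I" "finite J" "p \<in> J" "q \<in> J" "p \<noteq> q" "c\<^sup>2 + s\<^sup>2 = 1" "c \<noteq> -1" "R \<subseteq> I"
  shows "gauss_invariant (I \<times> J) (rotate_cols p q c s R)"
proof -
  have "finite R" using assms(1,8) by (rule finite_subset[rotated])
  then show ?thesis using \<open>R \<subseteq> I\<close>
  proof (induction R rule: finite_induct)
    case empty
    have "rotate_cols p q c s ({} :: 'a set) = (\<lambda>A. A)" by (auto simp: rotate_cols_def fun_eq_iff)
    then show ?case by (simp add: gauss_invariant_id)
  next
    case (insert i R)
    have split: "rotate_cols p q c s (insert i R) = rotate_coords (i, p) (i, q) c s \<circ> rotate_cols p q c s R"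
      using insert.hyps \<open>p \<noteq> q\<close> by (auto simp: rotate_cols_def rotate_coords_def fun_eq_iff)
    have "gauss_invariant (I \<times> J) (rotate_coords (i, p) (i, q) c s)"
      using insert.prems assms by (intro gauss_invariant_rotate_coords) auto
    from gauss_invariant_comp[OF this insert.IH] insert.prems show ?case
      by (simp add: split comp_def)
  qed
qed

definition givens :: "'i \<Rightarrow> 'i \<Rightarrow> real \<Rightarrow> real \<Rightarrow> ('i \<Rightarrow> real) \<Rightarrow> ('i \<Rightarrow> real)" where
  "givens p q c s m = m(p := c * m p + s * m q, q := - s * m p + c * m q)"

lemma sum_remove_pair:
  assumes "finite I" "p \<in> I" "q \<in> I" "p \<noteq> q"
  shows "(\<Sum>i\<in>I. f i) = f p + f q + (\<Sum>i\<in>I - {p, q}. f i)"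
proof -
  have "(\<Sum>i\<in>I. f i) = f p + (\<Sum>i\<in>I - {p}. f i)" using assms by (simp add: sum.remove)
  also have "(\<Sum>i\<in>I - {p}. f i) = f q + (\<Sum>i\<in>I - {p} - {q}. f i)"
    using assms by (intro sum.remove) auto
  finally show ?thesis by (simp add: add.assoc insert_commute set_diff_eq)
qed

lemma rotation_sum_squares:
  fixes c s a b :: real
  assumes "c\<^sup>2 + s\<^sup>2 = 1"
  shows "(c * a - s * b)\<^sup>2 + (s * a + c * b)\<^sup>2 = a\<^sup>2 + b\<^sup>2"
proof -
  have "(c * a - s * b)\<^sup>2 + (s * a + c * b)\<^sup>2 = (c\<^sup>2 + s\<^sup>2) * (a\<^sup>2 + b\<^sup>2)"
    unfolding power2_eq_square by algebra
  then show ?thesis using assms by simp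
qed

lemma sum_squares_givens:
  assumes "finite I" "p \<in> I" "q \<in> I" "p \<noteq> q" "c\<^sup>2 + s\<^sup>2 = 1"
  shows "(\<Sum>i\<in>I. (givens p q c s m i)\<^sup>2) = (\<Sum>i\<in>I. (m i)\<^sup>2)"
proof -
  have "(givens p q c s m p)\<^sup>2 + (givens p q c s m q)\<^sup>2 = (m p)\<^sup>2 + (m q)\<^sup>2"
    using rotation_sum_squares[of c "-s" "m p" "m q"] assms(4,5) by (simp add: givens_def algebra_simps)
  moreover have "(\<Sum>i\<in>I - {p, q}. (givens p q c s m i)\<^sup>2) = (\<Sum>i\<in>I - {p, q}. (m i)\<^sup>2)"
    by (rule sum.cong) (auto simp: givens_def)
  ultimately show ?thesis using assms(1-4) by (simp add: sum_remove_pair[of I p q])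
qed

lemma givens_annihilate:
  assumes "m q \<noteq> 0" "p \<noteq> q"
  obtains c s where "c\<^sup>2 + s\<^sup>2 = 1" "c \<noteq> -1" "givens p q c s m q = 0"
proof -
  define r where "r = sqrt ((m p)\<^sup>2 + (m q)\<^sup>2)"
  have r: "r > 0" "r\<^sup>2 = (m p)\<^sup>2 + (m q)\<^sup>2"
    unfolding r_def using assms(1) by (simp_all add: add_nonneg_pos)
  have cs: "(m p / r)\<^sup>2 + (m q / r)\<^sup>2 = 1"
    using r assms(1) by (simp add: power_divide add_divide_distrib[symmetric])
  moreover have "m p / r \<noteq> -1"
  proof
    assume "m p / r = -1"
    with cs have "(m q / r)\<^sup>2 = 0" by simp
    with r assms(1) show False by simp
  qed
  moreover have "givens p q (m p / r) (m q / r) m q = 0"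
    using assms(2) by (simp add: givens_def)
  ultimately show ?thesis by (rule that)
qed

lemma givens_zero_tail:
  fixes \<Phi> :: "(nat \<Rightarrow> real) \<Rightarrow> 'x"
  assumes inv: "\<And>m q c s. 0 < q \<Longrightarrow> q < N \<Longrightarrow> c\<^sup>2 + s\<^sup>2 = 1 \<Longrightarrow> c \<noteq> -1 \<Longrightarrow> \<Phi> (givens 0 q c s m) = \<Phi> m"
    and "0 < N"
  obtains m' where "\<Phi> m' = \<Phi> m" "(m' 0)\<^sup>2 = (\<Sum>i<N. (m i)\<^sup>2)" "\<And>i. 0 < i \<Longrightarrow> i < N \<Longrightarrow> m' i = 0"
proof -
  have "\<exists>m'. \<Phi> m' = \<Phi> m \<and> (\<Sum>i<N. (m' i)\<^sup>2) = (\<Sum>i<N. (m i)\<^sup>2) \<and> (\<forall>i. 0 < i \<and> i < j \<longrightarrow> m' i = 0)"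
    if "j \<le> N" for j
    using that
  proof (induction j)
    case 0
    then show ?case by auto
  next
    case (Suc j)
    then obtain m' where m': "\<Phi> m' = \<Phi> m" "(\<Sum>i<N. (m' i)\<^sup>2) = (\<Sum>i<N. (m i)\<^sup>2)"
      "\<forall>i. 0 < i \<and> i < j \<longrightarrow> m' i = 0" by auto
    show ?case
    proof (cases "j = 0 \<or> m' j = 0")
      case True
      then show ?thesis using m' by (intro exI[of _ m']) (auto simp: less_Suc_eq)
    next
      case False
      then obtain c s where cs: "c\<^sup>2 + s\<^sup>2 = 1" "c \<noteq> -1" "givens 0 j c s m' j = 0"
        using givens_annihilate[of m' j 0] by auto
      have "(\<Sum>i<N. (givens 0 j c s m' i)\<^sup>2) = (\<Sum>i<N. (m' i)\<^sup>2)"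
        using False Suc.prems cs by (intro sum_squares_givens) auto
      moreover have "\<Phi> (givens 0 j c s m') = \<Phi> m'"
        using False Suc.prems cs by (intro inv) auto
      moreover have "givens 0 j c s m' i = 0" if "0 < i" "i < Suc j" for i
        using m'(3) cs(3) that by (cases "i = j") (auto simp: givens_def)
      ultimately show ?thesis using m' by (intro exI[of _ "givens 0 j c s m'"]) auto
    qed
  qed
  then obtain m' where m': "\<Phi> m' = \<Phi> m" "(\<Sum>i<N. (m' i)\<^sup>2) = (\<Sum>i<N. (m i)\<^sup>2)"
    "\<And>i. 0 < i \<Longrightarrow> i < N \<Longrightarrow> m' i = 0" by blast
  have "(\<Sum>i<N. (m' i)\<^sup>2) = (\<Sum>i<N. if i = 0 then (m' 0)\<^sup>2 else 0)"
    using m'(3) by (intro sum.cong) auto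
  with \<open>0 < N\<close> m' show ?thesis by (intro that[of m']) auto
qed

definition col_dot :: "nat \<Rightarrow> (nat \<Rightarrow> real) \<Rightarrow> (nat \<times> 'b \<Rightarrow> real) \<Rightarrow> 'b \<Rightarrow> real" where
  "col_dot n m A k = (\<Sum>i<n. m i * A (i, k))"

lemma col_dot_rotate_rows:
  assumes "p < n" "q < n" "p \<noteq> q" "k \<in> J"
  shows "col_dot n m (rotate_rows p q c s J A) k = col_dot n (givens p q c s m) A k"
proof -
  have "col_dot n m (rotate_rows p q c s J A) k
      = m p * (c * A (p, k) - s * A (q, k)) + m q * (s * A (p, k) + c * A (q, k))
        + (\<Sum>i\<in>{..<n} - {p, q}. m i * A (i, k))"
    unfolding col_dot_def using assms
    by (subst sum_remove_pair[of _ p q]) (auto simp: rotate_rows_def intro!: sum.cong)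
  also have "\<dots> = givens p q c s m p * A (p, k) + givens p q c s m q * A (q, k)
      + (\<Sum>i\<in>{..<n} - {p, q}. givens p q c s m i * A (i, k))"
    using assms by (auto simp: givens_def algebra_simps intro!: sum.cong)
  also have "\<dots> = col_dot n (givens p q c s m) A k"
    unfolding col_dot_def using assms by (subst (2) sum_remove_pair[of _ p q]) auto
  finally show ?thesis .
qed

lemma emeasure_sum_sq_col_dot_le_eq:
  fixes J J' :: "'b set"
  assumes "n \<ge> 1" "finite J" "J' \<subseteq> J"
  shows "emeasure (gauss ({..<n} \<times> J)) {A \<in> space (gauss ({..<n} \<times> J)). (\<Sum>k\<in>J'. (col_dot n m A k)\<^sup>2) \<le> t}
    = emeasure (gauss ({..<n} \<times> J))
        {A \<in> space (gauss ({..<n} \<times> J)). (\<Sum>i<n. (m i)\<^sup>2) * (\<Sum>k\<in>J'. (A (0, k))\<^sup>2) \<le> t}"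
proof -
  let ?K = "{..<n} \<times> J"
  define \<Phi> where "\<Phi> m = emeasure (gauss ?K) {A \<in> space (gauss ?K). (\<Sum>k\<in>J'. (col_dot n m A k)\<^sup>2) \<le> t}"
    for m
  have inv: "\<Phi> (givens 0 q c s m) = \<Phi> m"
    if "0 < q" "q < n" "c\<^sup>2 + s\<^sup>2 = 1" "c \<noteq> -1" for m q c s
  proof -
    have rot: "gauss_invariant ?K (rotate_rows 0 q c s J)"
      using that assms by (intro gauss_invariant_rotate_rows) auto
    have "(\<Sum>k\<in>J'. (col_dot n (givens 0 q c s m) A k)\<^sup>2)
        = (\<Sum>k\<in>J'. (col_dot n m (rotate_rows 0 q c s J A) k)\<^sup>2)" for A
      using that assms by (intro sum.cong refl) (simp add: col_dot_rotate_rows subsetD)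
    then have "\<Phi> (givens 0 q c s m) = emeasure (gauss ?K)
        {A \<in> space (gauss ?K). (\<Sum>k\<in>J'. (col_dot n m (rotate_rows 0 q c s J A) k)\<^sup>2) \<le> t}"
      unfolding \<Phi>_def by simp
    also have "\<dots> = \<Phi> m"
      unfolding \<Phi>_def by (rule emeasure_gauss_invariant[OF rot]) (unfold col_dot_def, measurable)
    finally show ?thesis .
  qed
  have "0 < n" using assms(1) by simp
  obtain m' where m': "\<Phi> m' = \<Phi> m" "(m' 0)\<^sup>2 = (\<Sum>i<n. (m i)\<^sup>2)"
    "\<And>i. 0 < i \<Longrightarrow> i < n \<Longrightarrow> m' i = 0"
    using givens_zero_tail[where m = m, OF inv \<open>0 < n\<close>] by blast
  have col: "col_dot n m' A k = m' 0 * A (0, k)" for A k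
  proof -
    have "col_dot n m' A k = (\<Sum>i<n. if i = 0 then m' 0 * A (0, k) else 0)"
      unfolding col_dot_def using m'(3) by (intro sum.cong) auto
    then show ?thesis using assms(1) by simp
  qed
  have "\<Phi> m' = emeasure (gauss ?K)
      {A \<in> space (gauss ?K). (\<Sum>i<n. (m i)\<^sup>2) * (\<Sum>k\<in>J'. (A (0, k))\<^sup>2) \<le> t}"
    unfolding \<Phi>_def col m'(2)[symmetric] by (simp add: sum_distrib_left power_mult_distrib)
  then show ?thesis using m'(1) unfolding \<Phi>_def by simp
qed

lemma row_dot_rotate_cols:
  fixes d :: nat
  assumes "p < d" "q < d" "p \<noteq> q" "l \<in> R"
  shows "(\<Sum>j<d. rotate_cols p q c s R A (l, j) * x j) = (\<Sum>j<d. A (l, j) * givens p q c s x j)"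
proof -
  have "(\<Sum>j<d. rotate_cols p q c s R A (l, j) * x j)
      = (c * A (l, p) - s * A (l, q)) * x p + (s * A (l, p) + c * A (l, q)) * x q
        + (\<Sum>j\<in>{..<d} - {p, q}. A (l, j) * x j)"
    using assms
    by (subst sum_remove_pair[of _ p q]) (auto simp: rotate_cols_def intro!: sum.cong)
  also have "\<dots> = A (l, p) * givens p q c s x p + A (l, q) * givens p q c s x q
      + (\<Sum>j\<in>{..<d} - {p, q}. A (l, j) * givens p q c s x j)"
    using assms by (auto simp: givens_def algebra_simps intro!: sum.cong)
  also have "\<dots> = (\<Sum>j<d. A (l, j) * givens p q c s x j)"
    using assms by (subst (2) sum_remove_pair[of _ p q]) auto
  finally show ?thesis .
qed

lemma vec_norm_AtMAx_rotate_cols: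
  assumes pq: "p < d" "q < d" "p \<noteq> q" and cs: "c\<^sup>2 + s\<^sup>2 = 1"
  shows "vec_norm d (AtMAx n d (rotate_cols p q c s {..<n} A) M x)
       = vec_norm d (AtMAx n d A M (givens p q c s x))"
proof -
  define V where "V = AtMAx n d A M (givens p q c s x)"
  define W where "W = AtMAx n d (rotate_cols p q c s {..<n} A) M x"
  define u where "u i = (\<Sum>l<n. M i l * (\<Sum>j<d. A (l, j) * givens p q c s x j))" for i
  have V: "V k = (\<Sum>i<n. A (i, k) * u i)" for k
    unfolding V_def u_def AtMAx_def by (simp add: sum_distrib_left mult.assoc)
  have W: "W k = (\<Sum>i<n. rotate_cols p q c s {..<n} A (i, k) * u i)" for k
  proof -
    have "W k = (\<Sum>i<n. \<Sum>l<n. rotate_cols p q c s {..<n} A (i, k) * M i l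
        * (\<Sum>j<d. A (l, j) * givens p q c s x j))"
      unfolding W_def AtMAx_def by (intro sum.cong refl) (simp add: row_dot_rotate_cols[OF pq])
    then show ?thesis unfolding u_def by (simp add: sum_distrib_left mult.assoc)
  qed
  have "W k = V k" if "k \<noteq> p" "k \<noteq> q" for k
    unfolding W V using that by (intro sum.cong) (auto simp: rotate_cols_def)
  moreover have "W p = c * V p - s * V q" "W q = s * V p + c * V q"
    unfolding W V using pq
    by (simp_all add: rotate_cols_def sum_distrib_left sum_subtractf[symmetric]
        sum.distrib[symmetric] algebra_simps)
  ultimately have "(\<Sum>k<d. (W k)\<^sup>2) = (\<Sum>k<d. (V k)\<^sup>2)"
    using pq rotation_sum_squares[OF cs, of "V p" "V q"]
    by (simp add: sum_remove_pair[of "{..<d}" p q])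
  then show ?thesis unfolding vec_norm_def V_def W_def by simp
qed

definition mul_col0 :: "nat \<Rightarrow> (nat \<Rightarrow> nat \<Rightarrow> real) \<Rightarrow> (nat \<times> nat \<Rightarrow> real) \<Rightarrow> nat \<Rightarrow> real" where
  "mul_col0 n M A i = (\<Sum>l<n. M i l * A (l, 0))"

lemma emeasure_vec_norm_AtMAx_le_eq:
  assumes "d \<ge> 1" "T \<ge> 0"
  shows "emeasure (gauss ({..<n} \<times> {..<d}))
      {A \<in> space (gauss ({..<n} \<times> {..<d})). vec_norm d (AtMAx n d A M x) \<le> T}
    = emeasure (gauss ({..<n} \<times> {..<d})) {A \<in> space (gauss ({..<n} \<times> {..<d})).
        (vec_norm d x)\<^sup>2 * (\<Sum>k<d. (col_dot n (mul_col0 n M A) A k)\<^sup>2) \<le> T\<^sup>2}"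
proof -
  let ?K = "{..<n} \<times> {..<d}"
  define \<Phi> where "\<Phi> x = emeasure (gauss ?K) {A \<in> space (gauss ?K). vec_norm d (AtMAx n d A M x) \<le> T}"
    for x
  have inv: "\<Phi> (givens 0 q c s x) = \<Phi> x"
    if "0 < q" "q < d" "c\<^sup>2 + s\<^sup>2 = 1" "c \<noteq> -1" for x q c s
  proof -
    have rot: "gauss_invariant ?K (rotate_cols 0 q c s {..<n})"
      using that by (intro gauss_invariant_rotate_cols) auto
    have "\<Phi> (givens 0 q c s x) = emeasure (gauss ?K)
        {A \<in> space (gauss ?K). vec_norm d (AtMAx n d (rotate_cols 0 q c s {..<n} A) M x) \<le> T}"
      unfolding \<Phi>_def using that by (simp add: vec_norm_AtMAx_rotate_cols)
    also have "\<dots> = \<Phi> x"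
      unfolding \<Phi>_def by (rule emeasure_gauss_invariant[OF rot]) (unfold vec_norm_def AtMAx_def, measurable)
    finally show ?thesis .
  qed
  have "0 < d" using assms(1) by simp
  obtain x' where x': "\<Phi> x' = \<Phi> x" "(x' 0)\<^sup>2 = (\<Sum>j<d. (x j)\<^sup>2)"
    "\<And>j. 0 < j \<Longrightarrow> j < d \<Longrightarrow> x' j = 0"
    using givens_zero_tail[where m = x, OF inv \<open>0 < d\<close>] by blast
  have row: "(\<Sum>j<d. A (l, j) * x' j) = A (l, 0) * x' 0" for A l
  proof -
    have "(\<Sum>j<d. A (l, j) * x' j) = (\<Sum>j<d. if j = 0 then A (l, 0) * x' 0 else 0)"
      using x'(3) by (intro sum.cong) auto
    then show ?thesis using \<open>0 < d\<close> by simp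
  qed
  have AtMAx_x': "AtMAx n d A M x' k = x' 0 * col_dot n (mul_col0 n M A) A k" for A k
    unfolding AtMAx_def row col_dot_def mul_col0_def by (simp add: sum_distrib_left mult_ac)
  have "vec_norm d (AtMAx n d A M x') \<le> T
      \<longleftrightarrow> (vec_norm d x)\<^sup>2 * (\<Sum>k<d. (col_dot n (mul_col0 n M A) A k)\<^sup>2) \<le> T\<^sup>2" for A
  proof -
    have "(\<Sum>k<d. (AtMAx n d A M x' k)\<^sup>2)
        = (vec_norm d x)\<^sup>2 * (\<Sum>k<d. (col_dot n (mul_col0 n M A) A k)\<^sup>2)"
      unfolding AtMAx_x' vec_norm_def
      by (simp add: sum_nonneg power_mult_distrib sum_distrib_left x'(2))
    moreover have "vec_norm d (AtMAx n d A M x') \<le> T \<longleftrightarrow> (\<Sum>k<d. (AtMAx n d A M x' k)\<^sup>2) \<le> T\<^sup>2"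
      unfolding vec_norm_def using assms(2) real_le_lsqrt sqrt_le_D by blast
    ultimately show ?thesis by simp
  qed
  then show ?thesis using x'(1) unfolding \<Phi>_def by simp
qed

lemma emeasure_gauss_coord:
  assumes "\<kappa> \<in> K" "B \<in> sets borel"
  shows "emeasure (gauss K) {A \<in> space (gauss K). A \<kappa> \<in> B} = emeasure std_normal_distribution B"
proof -
  interpret product_prob_space "\<lambda>_. std_normal_distribution" K
    by (simp add: product_prob_space_def product_prob_space_axioms_def
        product_sigma_finite_std_normal prob_space_std_normal)
  show ?thesis using assms by (intro emeasure_PiM_Collect_single) simp_all
qed

lemma emeasure_std_normal_abs_le:
  assumes "b \<ge> 0"
  shows "emeasure std_normal_distribution {v. \<bar>v\<bar> \<le> b} \<le> ennreal (2 * b / sqrt (2 * pi))"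
proof -
  have "{v. \<bar>v\<bar> \<le> b} = {-b..b}" by auto
  moreover have "emeasure std_normal_distribution {-b..b}
      = (\<integral>\<^sup>+v. ennreal (std_normal_density v) * indicator {-b..b} v \<partial>lborel)"
    by (subst emeasure_density) auto
  moreover have "\<dots> \<le> (\<integral>\<^sup>+v. ennreal (1 / sqrt (2 * pi)) * indicator {-b..b} v \<partial>lborel)"
    by (intro nn_integral_mono mult_right_mono) (auto simp: std_normal_density_def divide_le_cancel)
  moreover have "\<dots> = ennreal (2 * b / sqrt (2 * pi))"
    using assms by (subst nn_integral_cmult_indicator) (auto simp: ennreal_mult'[symmetric])
  ultimately show ?thesis by simp
qed

lemma emeasure_col_dot_sq_le:
  assumes "n \<ge> 1" "finite J" "k \<in> J" "(\<Sum>i<n. (m i)\<^sup>2) > 0" "a \<ge> 0"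
  shows "emeasure (gauss ({..<n} \<times> J)) {A \<in> space (gauss ({..<n} \<times> J)). (col_dot n m A k)\<^sup>2 \<le> a\<^sup>2}
    \<le> ennreal (2 * a / (sqrt (\<Sum>i<n. (m i)\<^sup>2) * sqrt (2 * pi)))"
proof -
  let ?K = "{..<n} \<times> J"
  define R where "R = (\<Sum>i<n. (m i)\<^sup>2)"
  have "R > 0" using assms(4) unfolding R_def .
  have "R * v\<^sup>2 \<le> a\<^sup>2 \<longleftrightarrow> \<bar>v\<bar> \<le> a / sqrt R" for v
  proof -
    have "R * v\<^sup>2 = (sqrt R * \<bar>v\<bar>)\<^sup>2" using \<open>R > 0\<close> by (simp add: power_mult_distrib)
    then have "R * v\<^sup>2 \<le> a\<^sup>2 \<longleftrightarrow> sqrt R * \<bar>v\<bar> \<le> a"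
      using assms(5) \<open>R > 0\<close> by (simp add: power2_le_iff_abs_le abs_mult)
    then show ?thesis using \<open>R > 0\<close> by (simp add: field_simps)
  qed
  then have "emeasure (gauss ?K) {A \<in> space (gauss ?K). (col_dot n m A k)\<^sup>2 \<le> a\<^sup>2}
      = emeasure (gauss ?K) {A \<in> space (gauss ?K). A (0, k) \<in> {v. \<bar>v\<bar> \<le> a / sqrt R}}"
    using emeasure_sum_sq_col_dot_le_eq[OF assms(1,2), of "{k}" m "a\<^sup>2"] assms(3)
    by (simp add: R_def)
  also have "\<dots> = emeasure std_normal_distribution {v. \<bar>v\<bar> \<le> a / sqrt R}"
    using assms by (intro emeasure_gauss_coord) auto
  also have "\<dots> \<le> ennreal (2 * (a / sqrt R) / sqrt (2 * pi))"
    using assms(5) \<open>R > 0\<close> by (intro emeasure_std_normal_abs_le) simp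
  finally show ?thesis by (simp add: R_def)
qed

lemma nn_integral_std_normal_exp_neg_sq:
  assumes "t > 0"
  shows "(\<integral>\<^sup>+v. ennreal (exp (- t * v\<^sup>2)) \<partial>std_normal_distribution) = ennreal (1 / sqrt (1 + 2 * t))"
proof -
  define \<sigma> where "\<sigma> = 1 / sqrt (1 + 2 * t)"
  have "\<sigma> > 0" and \<sigma>2: "\<sigma>\<^sup>2 = 1 / (1 + 2 * t)"
    unfolding \<sigma>_def using assms by (simp_all add: power_divide)
  have density: "std_normal_density v * exp (- t * v\<^sup>2) = \<sigma> * normal_density 0 \<sigma> v" for v
  proof -
    have "sqrt (2 * pi * \<sigma>\<^sup>2) = sqrt (2 * pi) / sqrt (1 + 2 * t)"
      unfolding \<sigma>2 by (simp add: real_sqrt_divide)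
    then have coeff: "\<sigma> * (1 / sqrt (2 * pi * \<sigma>\<^sup>2)) = 1 / sqrt (2 * pi)"
      unfolding \<sigma>_def using assms by simp
    have expo: "- (v - 0)\<^sup>2 / (2 * \<sigma>\<^sup>2) = - v\<^sup>2 / 2 + - t * v\<^sup>2"
      unfolding \<sigma>2 using assms by (simp add: field_simps)
    show ?thesis unfolding normal_density_def std_normal_density_def
      by (simp only: expo exp_add mult.assoc[symmetric] coeff) (simp add: mult_ac)
  qed
  have "(\<integral>\<^sup>+v. ennreal (exp (- t * v\<^sup>2)) \<partial>std_normal_distribution)
      = (\<integral>\<^sup>+v. ennreal \<sigma> * ennreal (normal_density 0 \<sigma> v) \<partial>lborel)"
  proof -
    have "ennreal (std_normal_density v) * ennreal (exp (- t * v\<^sup>2))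
        = ennreal \<sigma> * ennreal (normal_density 0 \<sigma> v)" for v
      using density[of v] \<open>\<sigma> > 0\<close> by (simp add: ennreal_mult[symmetric])
    then show ?thesis by (subst nn_integral_density) simp_all
  qed
  also have "\<dots> = ennreal \<sigma> * (\<integral>\<^sup>+v. ennreal (normal_density 0 \<sigma> v) \<partial>lborel)"
    by (subst nn_integral_cmult) auto
  also have "(\<integral>\<^sup>+v. ennreal (normal_density 0 \<sigma> v) \<partial>lborel) = 1"
    using \<open>\<sigma> > 0\<close> by (subst nn_integral_eq_integral) auto
  finally show ?thesis unfolding \<sigma>_def by simp
qed

lemma prod_row0:
  fixes f :: "'b \<Rightarrow> 'c::comm_monoid_mult"
  assumes "finite I" "(0::nat) \<in> I"
  shows "(\<Prod>\<kappa>\<in>I \<times> J. if fst \<kappa> = 0 then f (snd \<kappa>) else 1) = (\<Prod>k\<in>J. f k)"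
proof -
  have "(\<Prod>\<kappa>\<in>I \<times> J. if fst \<kappa> = 0 then f (snd \<kappa>) else 1) = (\<Prod>i\<in>I. \<Prod>k\<in>J. if i = 0 then f k else 1)"
    by (simp add: prod.cartesian_product case_prod_beta')
  also have "\<dots> = (\<Prod>i\<in>I. if i = 0 then (\<Prod>k\<in>J. f k) else 1)"
    by (intro prod.cong) auto
  finally show ?thesis using assms by simp
qed

lemma emeasure_row0_sum_sq_le:
  fixes I :: "nat set" and J :: "'b set"
  assumes "finite I" "0 \<in> I" "finite J" "t > 0"
  shows "emeasure (gauss (I \<times> J)) {A \<in> space (gauss (I \<times> J)). (\<Sum>k\<in>J. (A (0, k))\<^sup>2) \<le> s}
     \<le> ennreal (exp (t * s) * (1 / sqrt (1 + 2 * t)) ^ card J)"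
proof -
  interpret product_sigma_finite "\<lambda>_::nat \<times> 'b. std_normal_distribution"
    by (rule product_sigma_finite_std_normal)
  let ?K = "I \<times> J"
  let ?S = "{A \<in> space (gauss ?K). (\<Sum>k\<in>J. (A (0, k))\<^sup>2) \<le> s}"
  define G where "G = (\<lambda>(\<kappa> :: nat \<times> 'b) v. ennreal (if fst \<kappa> = 0 then exp (- t * v\<^sup>2) else 1))"
  have [measurable]: "G \<kappa> \<in> borel_measurable std_normal_distribution" for \<kappa>
    unfolding G_def by (simp add: measurable_cong_sets[OF sets_std_normal refl])
  have prod_G: "(\<Prod>\<kappa>\<in>?K. G \<kappa> (A \<kappa>)) = ennreal (exp (- t * (\<Sum>k\<in>J. (A (0, k))\<^sup>2)))" for A
  proof -
    have "(\<Prod>\<kappa>\<in>?K. G \<kappa> (A \<kappa>)) = ennreal (\<Prod>\<kappa>\<in>?K. if fst \<kappa> = 0 then exp (- t * (A (0, snd \<kappa>))\<^sup>2) else 1)"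
      unfolding G_def by (subst prod_ennreal[symmetric]) (auto intro!: prod.cong)
    also have "\<dots> = ennreal (\<Prod>k\<in>J. exp (- t * (A (0, k))\<^sup>2))"
      using prod_row0[OF assms(1,2), of "\<lambda>k. exp (- t * (A (0, k))\<^sup>2)" J] by simp
    finally show ?thesis using assms(3) by (simp add: exp_sum sum_distrib_left)
  qed
  text \<open>Markov's inequality for \<open>exp (- t \<Sum> A(0,k)\<^sup>2)\<close>.\<close>
  have "emeasure (gauss ?K) ?S = (\<integral>\<^sup>+A. indicator ?S A \<partial>gauss ?K)"
    by (rule nn_integral_indicator[symmetric]) measurable
  also have "\<dots> \<le> (\<integral>\<^sup>+A. ennreal (exp (t * s)) * (\<Prod>\<kappa>\<in>?K. G \<kappa> (A \<kappa>)) \<partial>gauss ?K)"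
  proof (rule nn_integral_mono)
    fix A :: "nat \<times> 'b \<Rightarrow> real"
    have "1 \<le> exp (t * s) * exp (- t * (\<Sum>k\<in>J. (A (0, k))\<^sup>2))" if "(\<Sum>k\<in>J. (A (0, k))\<^sup>2) \<le> s"
      using that assms(4) by (simp add: exp_add[symmetric] algebra_simps mult_left_mono)
    then show "indicator ?S A \<le> ennreal (exp (t * s)) * (\<Prod>\<kappa>\<in>?K. G \<kappa> (A \<kappa>))"
      by (auto simp: indicator_def prod_G ennreal_mult'[symmetric])
  qed
  also have "\<dots> = ennreal (exp (t * s)) * (\<Prod>\<kappa>\<in>?K. integral\<^sup>N std_normal_distribution (G \<kappa>))"
    using assms by (subst nn_integral_cmult) (simp_all add: product_nn_integral_prod)
  also have "(\<Prod>\<kappa>\<in>?K. integral\<^sup>N std_normal_distribution (G \<kappa>))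
      = (\<Prod>\<kappa>\<in>?K. if fst \<kappa> = 0 then ennreal (1 / sqrt (1 + 2 * t)) else 1)"
    using nn_integral_std_normal_exp_neg_sq[OF assms(4)] prob_space.emeasure_space_1[OF prob_space_std_normal]
    by (intro prod.cong) (auto simp: G_def)
  also have "\<dots> = ennreal ((1 / sqrt (1 + 2 * t)) ^ card J)"
    using prod_row0[OF assms(1,2), of "\<lambda>_. ennreal (1 / sqrt (1 + 2 * t))" J] assms(4)
    by (simp add: ennreal_power)
  finally show ?thesis by (simp add: ennreal_mult'[symmetric])
qed

lemma emeasure_col_dot_sum_sq_le:
  fixes J :: "'b set"
  assumes "n \<ge> 1" "finite J" "a\<^sup>2 \<le> (\<Sum>i<n. (m i)\<^sup>2)" "a > 0" "t > 0"
  shows "emeasure (gauss ({..<n} \<times> J)) {A \<in> space (gauss ({..<n} \<times> J)). (\<Sum>k\<in>J. (col_dot n m A k)\<^sup>2) \<le> s}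
    \<le> ennreal (exp (t * (s / a\<^sup>2)) * (1 / sqrt (1 + 2 * t)) ^ card J)"
proof -
  let ?K = "{..<n} \<times> J"
  have "emeasure (gauss ?K) {A \<in> space (gauss ?K). (\<Sum>k\<in>J. (col_dot n m A k)\<^sup>2) \<le> s}
     = emeasure (gauss ?K) {A \<in> space (gauss ?K). (\<Sum>i<n. (m i)\<^sup>2) * (\<Sum>k\<in>J. (A (0, k))\<^sup>2) \<le> s}"
    using assms(1,2) by (rule emeasure_sum_sq_col_dot_le_eq) simp
  also have "\<dots> \<le> emeasure (gauss ?K) {A \<in> space (gauss ?K). (\<Sum>k\<in>J. (A (0, k))\<^sup>2) \<le> s / a\<^sup>2}"
  proof (rule emeasure_mono)
    have "a\<^sup>2 * (\<Sum>k\<in>J. (A (0, k))\<^sup>2) \<le> (\<Sum>i<n. (m i)\<^sup>2) * (\<Sum>k\<in>J. (A (0, k))\<^sup>2)" for A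
      using assms(3) by (intro mult_right_mono sum_nonneg) auto
    then show "{A \<in> space (gauss ?K). (\<Sum>i<n. (m i)\<^sup>2) * (\<Sum>k\<in>J. (A (0, k))\<^sup>2) \<le> s}
        \<subseteq> {A \<in> space (gauss ?K). (\<Sum>k\<in>J. (A (0, k))\<^sup>2) \<le> s / a\<^sup>2}"
      using assms(4) by (auto simp: field_simps intro: order_trans)
  qed measurable
  also have "\<dots> \<le> ennreal (exp (t * (s / a\<^sup>2)) * (1 / sqrt (1 + 2 * t)) ^ card J)"
    using assms by (intro emeasure_row0_sum_sq_le) auto
  finally show ?thesis .
qed

text \<open>Conditioning on the first column \<open>a\<^sub>0\<close> of \<open>A\<close> fixes the vector \<open>M a\<^sub>0\<close>; the remaining
  columns are independent of it.\<close>

lemma emeasure_later_cols_small_le: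
  assumes "n \<ge> 1" "d \<ge> 1" "a > 0" "t > 0"
  shows "emeasure (gauss ({..<n} \<times> {..<d})) {A \<in> space (gauss ({..<n} \<times> {..<d})).
      a\<^sup>2 \<le> (\<Sum>i<n. (mul_col0 n M A i)\<^sup>2) \<and> (\<Sum>k\<in>{1..<d}. (col_dot n (mul_col0 n M A) A k)\<^sup>2) \<le> s}
    \<le> ennreal (exp (t * (s / a\<^sup>2)) * (1 / sqrt (1 + 2 * t)) ^ (d - 1))"
    (is "emeasure _ ?E \<le> ennreal ?b")
proof -
  interpret product_sigma_finite "\<lambda>_::nat \<times> nat. std_normal_distribution"
    by (rule product_sigma_finite_std_normal)
  interpret C0: prob_space "gauss ({..<n} \<times> {0})" by (rule prob_space_gauss)
  define C0 where "C0 = {..<n} \<times> {0::nat}"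
  define C1 where "C1 = {..<n} \<times> {1..<d}"
  have KC: "{..<n} \<times> {..<d} = C0 \<union> C1" unfolding C0_def C1_def using assms(2) by auto
  have disj: "C0 \<inter> C1 = {}" "finite C0" "finite C1" unfolding C0_def C1_def by auto
  have E: "?E \<in> sets (gauss (C0 \<union> C1))"
    unfolding KC[symmetric] col_dot_def mul_col0_def by measurable
  then have "emeasure (gauss (C0 \<union> C1)) ?E = (\<integral>\<^sup>+A. indicator ?E A \<partial>gauss (C0 \<union> C1))"
    by simp
  also have "\<dots> = (\<integral>\<^sup>+z. (\<integral>\<^sup>+y. indicator ?E (merge C0 C1 (z, y)) \<partial>gauss C1) \<partial>gauss C0)"
    using E by (intro product_nn_integral_fold[OF disj]) simp
  also have "\<dots> \<le> (\<integral>\<^sup>+z. ennreal ?b \<partial>gauss C0)"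
  proof (rule nn_integral_mono)
    fix z assume z: "z \<in> space (gauss C0)"
    define u where "u i = (\<Sum>l<n. M i l * z (l, 0))" for i
    let ?Y = "{y \<in> space (gauss C1). (\<Sum>k\<in>{1..<d}. (col_dot n u y k)\<^sup>2) \<le> s}"
    have "merge C0 C1 (z, y) \<in> ?E \<longleftrightarrow> a\<^sup>2 \<le> (\<Sum>i<n. (u i)\<^sup>2) \<and> y \<in> ?Y"
      if "y \<in> space (gauss C1)" for y
    proof -
      have "mul_col0 n M (merge C0 C1 (z, y)) = u"
        by (auto simp: mul_col0_def u_def merge_def C0_def C1_def)
      moreover have "col_dot n u (merge C0 C1 (z, y)) k = col_dot n u y k" if "k \<in> {1..<d}" for k
        using that by (auto simp: col_dot_def merge_def C0_def C1_def intro!: sum.cong)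
      moreover have "merge C0 C1 (z, y) \<in> space (gauss (C0 \<union> C1))"
        using z \<open>y \<in> space (gauss C1)\<close> by (simp add: space_PiM merge_def PiE_def extensional_def)
      ultimately show ?thesis using that KC by auto
    qed
    then have indicator_E: "indicator ?E (merge C0 C1 (z, y))
        = (if a\<^sup>2 \<le> (\<Sum>i<n. (u i)\<^sup>2) then indicator ?Y y else 0)"
      if "y \<in> space (gauss C1)" for y
      using that by (simp add: indicator_def)
    show "(\<integral>\<^sup>+y. indicator ?E (merge C0 C1 (z, y)) \<partial>gauss C1) \<le> ennreal ?b"
    proof (cases "a\<^sup>2 \<le> (\<Sum>i<n. (u i)\<^sup>2)")
      case True
      have "(\<integral>\<^sup>+y. indicator ?E (merge C0 C1 (z, y)) \<partial>gauss C1) = (\<integral>\<^sup>+y. indicator ?Y y \<partial>gauss C1)"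
        by (rule nn_integral_cong) (simp only: indicator_E True if_True)
      also have "\<dots> = emeasure (gauss C1) ?Y"
        by (simp add: col_dot_def)
      also have "\<dots> \<le> ennreal (exp (t * (s / a\<^sup>2)) * (1 / sqrt (1 + 2 * t)) ^ card {1..<d})"
        unfolding C1_def using assms True by (intro emeasure_col_dot_sum_sq_le) auto
      finally show ?thesis by simp
    next
      case False
      have "(\<integral>\<^sup>+y. indicator ?E (merge C0 C1 (z, y)) \<partial>gauss C1) = (\<integral>\<^sup>+y. 0 \<partial>gauss C1)"
        by (rule nn_integral_cong) (simp only: indicator_E False if_False)
      then show ?thesis by simp
    qed
  qed
  also have "\<dots> = ennreal ?b"
    unfolding C0_def by (simp add: C0.emeasure_space_1)
  finally show ?thesis unfolding KC .
qed

lemma emeasure_sum_sq_col_dot_mul_col0_le: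
  assumes "n \<ge> 1" "d \<ge> 1" "i < n" "(\<Sum>l<n. (M i l)\<^sup>2) > 0" "a > 0" "t > 0"
  shows "emeasure (gauss ({..<n} \<times> {..<d})) {A \<in> space (gauss ({..<n} \<times> {..<d})).
      (\<Sum>k<d. (col_dot n (mul_col0 n M A) A k)\<^sup>2) \<le> s}
    \<le> ennreal (2 * a / (sqrt (\<Sum>l<n. (M i l)\<^sup>2) * sqrt (2 * pi)))
      + ennreal (exp (t * (s / a\<^sup>2)) * (1 / sqrt (1 + 2 * t)) ^ (d - 1))"
proof -
  let ?K = "{..<n} \<times> {..<d}"
  let ?u = "\<lambda>A. mul_col0 n M A"
  define E1 where "E1 = {A \<in> space (gauss ?K). (col_dot n (M i) A 0)\<^sup>2 \<le> a\<^sup>2}"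
  define E2 where "E2 = {A \<in> space (gauss ?K).
    a\<^sup>2 \<le> (\<Sum>i<n. (?u A i)\<^sup>2) \<and> (\<Sum>k\<in>{1..<d}. (col_dot n (?u A) A k)\<^sup>2) \<le> s}"
  have [measurable]: "E1 \<in> sets (gauss ?K)" "E2 \<in> sets (gauss ?K)"
    unfolding E1_def E2_def col_dot_def mul_col0_def by measurable
  have "{A \<in> space (gauss ?K). (\<Sum>k<d. (col_dot n (?u A) A k)\<^sup>2) \<le> s} \<subseteq> E1 \<union> E2"
  proof
    fix A assume A: "A \<in> {A \<in> space (gauss ?K). (\<Sum>k<d. (col_dot n (?u A) A k)\<^sup>2) \<le> s}"
    show "A \<in> E1 \<union> E2"
    proof (cases "A \<in> E1")
      case False
      have "?u A i = col_dot n (M i) A 0" by (simp add: mul_col0_def col_dot_def)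
      then have "a\<^sup>2 \<le> (?u A i)\<^sup>2" using A False unfolding E1_def by simp
      also have "\<dots> \<le> (\<Sum>i<n. (?u A i)\<^sup>2)" using assms(3) by (intro member_le_sum) auto
      moreover have "(\<Sum>k\<in>{1..<d}. (col_dot n (?u A) A k)\<^sup>2) \<le> (\<Sum>k<d. (col_dot n (?u A) A k)\<^sup>2)"
        by (intro sum_mono2) auto
      ultimately show ?thesis using A unfolding E2_def by auto
    qed simp
  qed
  then have "emeasure (gauss ?K) {A \<in> space (gauss ?K). (\<Sum>k<d. (col_dot n (?u A) A k)\<^sup>2) \<le> s}
      \<le> emeasure (gauss ?K) E1 + emeasure (gauss ?K) E2"
    by (intro order_trans[OF emeasure_mono emeasure_subadditive]) simp_all
  also have "\<dots> \<le> ennreal (2 * a / (sqrt (\<Sum>l<n. (M i l)\<^sup>2) * sqrt (2 * pi)))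
      + ennreal (exp (t * (s / a\<^sup>2)) * (1 / sqrt (1 + 2 * t)) ^ (d - 1))"
    unfolding E1_def E2_def using assms
    by (intro add_mono emeasure_col_dot_sq_le emeasure_later_cols_small_le) auto
  finally show ?thesis .
qed

lemma exists_row_sum_sq_ge:
  assumes "n \<ge> 1"
  obtains i where "i < n" "(frob_norm n M)\<^sup>2 \<le> real n * (\<Sum>l<n. (M i l)\<^sup>2)"
proof -
  define r where "r i = (\<Sum>l<n. (M i l)\<^sup>2)" for i
  have "Max (r ` {..<n}) \<in> r ` {..<n}" using assms by (intro Max_in) (auto simp: lessThan_empty_iff)
  then obtain i where i: "i < n" "Max (r ` {..<n}) = r i" by blast
  have "(frob_norm n M)\<^sup>2 = (\<Sum>j<n. r j)"
    unfolding frob_norm_def r_def by (simp add: sum_nonneg)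
  also have "\<dots> \<le> (\<Sum>j<n. r i)"
    unfolding i(2)[symmetric] by (intro sum_mono Max_ge) auto
  finally show ?thesis using i(1) that unfolding r_def by simp
qed

lemma vec_norm_pos:
  assumes "j < d" "x j \<noteq> 0"
  shows "vec_norm d x > 0"
  unfolding vec_norm_def using assms by (intro real_sqrt_gt_zero sum_pos2) auto

lemma frob_norm_pos:
  assumes "i < n" "j < n" "M i j \<noteq> 0"
  shows "frob_norm n M > 0"
proof -
  have "0 < (\<Sum>l<n. (M i l)\<^sup>2)" using assms by (intro sum_pos2[of _ j]) auto
  then have "0 < (\<Sum>i<n. \<Sum>l<n. (M i l)\<^sup>2)" using assms(1)
    by (intro sum_pos2[of "{..<n}" i "\<lambda>i. \<Sum>l<n. (M i l)\<^sup>2"]) (simp_all add: sum_nonneg)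
  then show ?thesis unfolding frob_norm_def by simp
qed

text \<open>Take \<open>t = 2 / \<theta>\<^sup>2 - 1/2\<close> with \<open>\<theta> = \<eta> powr (1/k)\<close>: then \<open>1 / sqrt (1 + 2 t) = \<theta> / 2\<close>,
  whose \<open>k\<close>-th power is \<open>\<eta> / 2\<^sup>k\<close>, while \<open>exp (t r) \<le> exp (k / 2) \<le> 2\<^sup>k\<close>.\<close>

lemma exists_chernoff_parameter:
  assumes "k \<ge> 1" "0 < \<eta>" "\<eta> < 1" "0 \<le> r" "r \<le> real k * (\<eta> powr (1 / real k))\<^sup>2 / 4"
  obtains t where "t > 0" "exp (t * r) * (1 / sqrt (1 + 2 * t)) ^ k \<le> \<eta>"
proof -
  define \<theta> where "\<theta> = \<eta> powr (1 / real k)"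
  have "0 < \<theta>" using assms(2) by (simp add: \<theta>_def)
  have "\<theta> < 1"
    using powr_less_mono2[of "1 / real k" \<eta> 1] assms(1-3) by (simp add: \<theta>_def)
  have "\<theta> ^ k = \<eta>"
    using assms(1,2) by (simp add: \<theta>_def powr_realpow[symmetric] powr_powr)
  define t where "t = 2 / \<theta>\<^sup>2 - 1/2"
  have "\<theta>\<^sup>2 < 1" using \<open>0 < \<theta>\<close> \<open>\<theta> < 1\<close> by (simp add: power_less_one_iff)
  then have "t > 0" using \<open>0 < \<theta>\<close> by (simp add: t_def field_simps)
  have "1 + 2 * t = (2 / \<theta>)\<^sup>2" using \<open>0 < \<theta>\<close> by (simp add: t_def field_simps power2_eq_square)
  then have "sqrt (1 + 2 * t) = 2 / \<theta>" using \<open>0 < \<theta>\<close> by (simp only: real_sqrt_abs) simp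
  then have pow: "(1 / sqrt (1 + 2 * t)) ^ k = \<eta> / 2 ^ k"
    using \<open>0 < \<theta>\<close> \<open>\<theta> ^ k = \<eta>\<close> by (simp add: power_divide)
  have "t * r \<le> (2 / \<theta>\<^sup>2) * (real k * \<theta>\<^sup>2 / 4)"
    using assms(4,5) \<open>0 < \<theta>\<close> by (intro mult_mono) (simp_all add: t_def \<theta>_def)
  then have "t * r \<le> real k * (1 / 2)" using \<open>0 < \<theta>\<close> by (simp add: field_simps)
  then have "exp (t * r) \<le> exp (1 / 2) ^ k" by (simp add: exp_of_nat_mult[symmetric])
  also have "\<dots> \<le> 2 ^ k"
  proof (intro power_mono)
    have "(exp (1 / 2 :: real))\<^sup>2 \<le> 2\<^sup>2"
      using exp_le by (simp add: power2_eq_square exp_add[symmetric])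
    then show "exp (1 / 2 :: real) \<le> 2" by (rule power2_le_imp_le) simp
  qed simp
  finally have "exp (t * r) * (1 / sqrt (1 + 2 * t)) ^ k \<le> 2 ^ k * (\<eta> / 2 ^ k)"
    unfolding pow using assms(2) by (intro mult_right_mono) simp_all
  then show ?thesis using \<open>t > 0\<close> that by simp
qed

lemma emeasure_vec_norm_AtMAx_le_bound:
  assumes "n \<ge> 1" "d \<ge> 1" "i < n" "(\<Sum>l<n. (M i l)\<^sup>2) > 0" "a > 0" "t > 0" "T \<ge> 0"
    and "vec_norm d x > 0"
  shows "emeasure (gauss ({..<n} \<times> {..<d}))
      {A \<in> space (gauss ({..<n} \<times> {..<d})). vec_norm d (AtMAx n d A M x) \<le> T}
    \<le> ennreal (2 * a / (sqrt (\<Sum>l<n. (M i l)\<^sup>2) * sqrt (2 * pi)))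
      + ennreal (exp (t * (T\<^sup>2 / (vec_norm d x)\<^sup>2 / a\<^sup>2)) * (1 / sqrt (1 + 2 * t)) ^ (d - 1))"
proof -
  let ?K = "{..<n} \<times> {..<d}"
  have "emeasure (gauss ?K) {A \<in> space (gauss ?K). vec_norm d (AtMAx n d A M x) \<le> T}
      = emeasure (gauss ?K) {A \<in> space (gauss ?K).
          (vec_norm d x)\<^sup>2 * (\<Sum>k<d. (col_dot n (mul_col0 n M A) A k)\<^sup>2) \<le> T\<^sup>2}"
    using assms(2,7) by (rule emeasure_vec_norm_AtMAx_le_eq)
  also have "\<dots> = emeasure (gauss ?K) {A \<in> space (gauss ?K).
      (\<Sum>k<d. (col_dot n (mul_col0 n M A) A k)\<^sup>2) \<le> T\<^sup>2 / (vec_norm d x)\<^sup>2}"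
    using assms(8) by (simp add: pos_le_divide_eq mult.commute)
  also have "\<dots> \<le> ennreal (2 * a / (sqrt (\<Sum>l<n. (M i l)\<^sup>2) * sqrt (2 * pi)))
      + ennreal (exp (t * (T\<^sup>2 / (vec_norm d x)\<^sup>2 / a\<^sup>2)) * (1 / sqrt (1 + 2 * t)) ^ (d - 1))"
    using assms(1-6) by (rule emeasure_sum_sq_col_dot_mul_col0_le)
  finally show ?thesis .
qed

lemma threshold_ratio_le:
  fixes F X R \<eta> :: real and n k :: nat
  assumes "F\<^sup>2 \<le> real n * R" "0 < X" "0 < R" "0 < \<eta>" "n \<ge> 1"
  shows "(F * X * sqrt (real k * pi / (8 * real n)) * \<eta> powr (1 + 1 / real k))\<^sup>2 / X\<^sup>2
      / (\<eta> * sqrt (2 * pi) * sqrt R / 2)\<^sup>2 \<le> real k * (\<eta> powr (1 / real k))\<^sup>2 / 4"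
proof -
  define \<theta> where "\<theta> = \<eta> powr (1 / real k)"
  have "\<eta> powr (1 + 1 / real k) = \<eta> * \<theta>" using assms(4) by (simp add: \<theta>_def powr_add)
  then have "(F * X * sqrt (real k * pi / (8 * real n)) * \<eta> powr (1 + 1 / real k))\<^sup>2
      = F\<^sup>2 * X\<^sup>2 * (real k * pi / (8 * real n)) * \<eta>\<^sup>2 * \<theta>\<^sup>2"
    by (simp add: power_mult_distrib)
  moreover have "(\<eta> * sqrt (2 * pi) * sqrt R / 2)\<^sup>2 = \<eta>\<^sup>2 * pi * R / 2"
    using assms(3) by (simp add: power_mult_distrib power_divide)
  ultimately have "(F * X * sqrt (real k * pi / (8 * real n)) * \<eta> powr (1 + 1 / real k))\<^sup>2 / X\<^sup>2
      / (\<eta> * sqrt (2 * pi) * sqrt R / 2)\<^sup>2 = F\<^sup>2 / (real n * R) * (real k * \<theta>\<^sup>2 / 4)"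
    using assms(2-5) by (simp add: field_simps)
  also have "\<dots> \<le> real k * \<theta>\<^sup>2 / 4"
    using assms(1,3,5) by (intro mult_left_le_one_le) simp_all
  finally show ?thesis unfolding \<theta>_def .
qed

theorem mainTheorem4:
  fixes n d :: nat and M :: "nat \<Rightarrow> nat \<Rightarrow> real" and x :: "nat \<Rightarrow> real" and \<eta> :: real
  assumes "d \<ge> 2"
    and "\<exists>i<n. \<exists>j<n. M i j \<noteq> 0"
    and "\<exists>j<d. x j \<noteq> 0"
    and "0 < \<eta>" and "\<eta> < 1/2"
  shows "measure (gaussian_matrix n d)
     {A \<in> space (gaussian_matrix n d).
        vec_norm d (AtMAx n d A M x)
          \<le> frob_norm n M * vec_norm d x * sqrt (real (d - 1) * pi / (8 * real n))
             * \<eta> powr (1 + 1 / real (d - 1))} \<le> 2 * \<eta>"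
proof -
  interpret prob_space "gauss ({..<n} \<times> {..<d})" by (rule prob_space_gauss)
  define F X k where "F = frob_norm n M" and "X = vec_norm d x" and "k = d - 1"
  define T where "T = F * X * sqrt (real k * pi / (8 * real n)) * \<eta> powr (1 + 1 / real k)"
  have "n \<ge> 1" "F > 0" "X > 0" "k \<ge> 1"
    using assms(1-3) frob_norm_pos vec_norm_pos by (auto simp: F_def X_def k_def)
  then have "T \<ge> 0" by (simp add: T_def)
  obtain i where "i < n" and F_le: "F\<^sup>2 \<le> real n * (\<Sum>l<n. (M i l)\<^sup>2)"
    using exists_row_sum_sq_ge[OF \<open>n \<ge> 1\<close>] unfolding F_def by blast
  define R where "R = (\<Sum>l<n. (M i l)\<^sup>2)"
  have "0 < real n * R" using F_le \<open>F > 0\<close> unfolding R_def by (smt (verit) zero_less_power2)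
  then have "R > 0" by (simp add: zero_less_mult_iff)
  text \<open>With this \<open>a\<close>, the anti-concentration term of the two-event bound is exactly \<open>\<eta>\<close>.\<close>
  define a where "a = \<eta> * sqrt (2 * pi) * sqrt R / 2"
  have "a > 0" using assms(4) \<open>R > 0\<close> by (simp add: a_def)
  have "T\<^sup>2 / X\<^sup>2 / a\<^sup>2 \<le> real k * (\<eta> powr (1 / real k))\<^sup>2 / 4"
    unfolding T_def a_def using F_le \<open>X > 0\<close> \<open>R > 0\<close> assms(4) \<open>n \<ge> 1\<close>
    by (intro threshold_ratio_le) (simp_all add: R_def)
  moreover have "\<eta> < 1" "0 \<le> T\<^sup>2 / X\<^sup>2 / a\<^sup>2" using assms(5) by simp_all
  ultimately obtain t where "t > 0" and t: "exp (t * (T\<^sup>2 / X\<^sup>2 / a\<^sup>2)) * (1 / sqrt (1 + 2 * t)) ^ k \<le> \<eta>"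
    using exists_chernoff_parameter[OF \<open>k \<ge> 1\<close> assms(4)] by blast
  have "emeasure (gauss ({..<n} \<times> {..<d}))
      {A \<in> space (gauss ({..<n} \<times> {..<d})). vec_norm d (AtMAx n d A M x) \<le> T}
      \<le> ennreal (2 * a / (sqrt R * sqrt (2 * pi)))
        + ennreal (exp (t * (T\<^sup>2 / X\<^sup>2 / a\<^sup>2)) * (1 / sqrt (1 + 2 * t)) ^ k)"
    unfolding R_def X_def k_def using assms(1) \<open>n \<ge> 1\<close> \<open>i < n\<close> \<open>a > 0\<close> \<open>t > 0\<close> \<open>T \<ge> 0\<close> \<open>X > 0\<close> \<open>R > 0\<close>
    by (intro emeasure_vec_norm_AtMAx_le_bound) (simp_all add: R_def X_def)
  also have "\<dots> \<le> ennreal \<eta> + ennreal \<eta>"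
    using t \<open>R > 0\<close> by (intro add_mono ennreal_leI) (simp_all add: a_def)
  also have "\<dots> = ennreal (2 * \<eta>)" using assms(4) by (simp add: ennreal_plus[symmetric])
  finally show ?thesis
    using assms(4) by (simp add: T_def F_def X_def k_def gaussian_matrix_def emeasure_eq_measure)
qed

end
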